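(* Let $\Omega\subset\mathbb{R}^n$ be a bounded open set, let $f:\Omega\to\mathbb{R}$ be a bounded function, and let $\lambda>0$. Define the extensions $f^{-}_{\overline\Omega},f^{+}_{\overline\Omega}:\overline\Omega\to\mathbb{R}$ and $f^{-}_{\mathbb{R}^n},f^{+}_{\mathbb{R}^n}:\mathbb{R}^n\to\mathbb{R}$ by $f^{\pm}_{\overline\Omega}(x)=f(x)$ for $x\in\Omega$, $f^{-}_{\overline\Omega}(x)=\inf_\Omega f$ and $f^{+}_{\overline\Omega}(x)=\sup_\Omega f$ for $x\in\partial\Omega$; $f^{\pm}_{\mathbb{R}^n}(x)=f(x)$ for $x\in\Omega$, $f^{-}_{\mathbb{R}^n}(x)=\inf_\Omega f$ and $f^{+}_{\mathbb{R}^n}(x)=\sup_\Omega f$ for $x\in\mathbb{R}^n\setminus\Omega$. Then for every $x\in\overline\Omega$: $$M_{\lambda,\Omega}(f^{-}_{\overline\Omega})(x)=M_\lambda(f^{-}_{\mathbb{R}^n})(x),\qquad M^{\lambda}_{\Omega}(f^{+}_{\overline\Omega})(x)=M^{\lambda}(f^{+}_{\mathbb{R}^n})(x),$$ $$M^{\lambda}_{\Omega}(M_{\lambda,\Omega}(f^{-}_{\overline\Omega}))(x)=M^{\lambda}(M_{\lambda}(f^{-}_{\mathbb{R}^n}))(x),\qquad M_{\lambda,\Omega}(M^{\lambda}_{\Omega}(f^{+}_{\overline\Omega}))(x)=M_{\lambda}(M^{\lambda}(f^{+}_{\mathbb{R}^n}))(x),$$ and consequently $$C^l_{\lambda,\Omega}(f^{-}_{\overline\Omega})(x)=C^l_\lambda(f^{-}_{\mathbb{R}^n})(x),\qquad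 C^u_{\lambda,\Omega}(f^{+}_{\overline\Omega})(x)=C^u_\lambda(f^{+}_{\mathbb{R}^n})(x).$$ Moreover, with $O_f=\sup_\Omega f-\inf_\Omega f$: (i) If $x\in\Omega$ satisfies $\mathrm{dist}^2(x,\partial\Omega)>O_f/\lambda$ and $z_x\in\overline\Omega$ satisfies $M_{\lambda,\Omega}(f^{-}_{\overline\Omega})(x)=f^{-}_{\overline\Omega}(z_x)+\lambda|z_x-x|^2$ [respectively $M^{\lambda}_{\Omega}(f^{+}_{\overline\Omega})(x)=f^{+}_{\overline\Omega}(z_x)-\lambda|z_x-x|^2$], then $z_x\in\Omega$. (ii) If $x\in\Omega$ satisfies $\mathrm{dist}^2(x,\partial\Omega)>4O_f/\lambda$ and $z_x\in\overline\Omega$ satisfies $M^{\lambda}_{\Omega}(M_{\lambda,\Omega}(f^{-}_{\overline\Omega}))(x)=M_{\lambda,\Omega}(f^{-}_{\overline\Omega})(z_x)-\lambda|z_x-x|^2$ [respectively $M_{\lambda,\Omega}(M^{\lambda}_{\Omega}(f^{+}_{\overline\Omega}))(x)=M^{\lambda}_{\Omega}(f^{+}_{\overline\Omega})(z_x)+\lambda|z_x-x|^2$], then $z_x\in\Omega$, and any $y_x\in\overline\Omega$ with $M_{\lambda,\Omega}(f^{-}_{\overline\Omega})(z_x)=f^{-}_{\overline\Omega}(y_x)+\lambda|y_x-z_x|^2$ [respectively $M^{\lambda}_{\Omega}(f^{+}_{\overline\Omega})(z_x)=f^{+}_{\overline\Omega}(y_x)-\lambda|y_x-z_x|^2$] satisfies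 $y_x\in\Omega$.
   Context: For a bounded $g:\mathbb{R}^n\to\mathbb{R}$ and $\lambda>0$, the lower and upper Moreau envelopes are $M_\lambda(g)(x)=\inf_{y\in\mathbb{R}^n}\{g(y)+\lambda|y-x|^2\}$ and $M^\lambda(g)(x)=\sup_{y\in\mathbb{R}^n}\{g(y)-\lambda|y-x|^2\}$. For bounded $g:\overline\Omega\to\mathbb{R}$ and $x\in\overline\Omega$, $M_{\lambda,\Omega}(g)(x)=\inf_{y\in\overline\Omega}\{g(y)+\lambda|y-x|^2\}$ and $M^{\lambda}_{\Omega}(g)(x)=\sup_{y\in\overline\Omega}\{g(y)-\lambda|y-x|^2\}$. $\mathrm{co}[h]$ denotes the convex envelope (largest convex function below $h$). The compensated convex transforms are $C^l_\lambda(g)(x)=\mathrm{co}[g+\lambda|\cdot|^2](x)-\lambda|x|^2$ and $C^u_\lambda(g)(x)=\lambda|x|^2-\mathrm{co}[\lambda|\cdot|^2-g](x)$, and the local ones are $C^l_{\lambda,\Omega}(g)=M^{\lambda}_{\Omega}(M_{\lambda,\Omega}(g))$ and $C^u_{\lambda,\Omega}(g)=M_{\lambda,\Omega}(M^{\lambda}_{\Omega}(g))$ on $\overline\Omega$. $\mathrm{dist}(x,A)=\inf_{y\in A}|x-y|$. *)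

theory Defs
  imports "HOL-Analysis.Analysis"
begin

definition Mlow :: "real \<Rightarrow> ('a::real_normed_vector \<Rightarrow> real) \<Rightarrow> 'a \<Rightarrow> real" where
  "Mlow lam g x = (INF y. g y + lam * (norm (y - x))^2)"

definition Mup :: "real \<Rightarrow> ('a::real_normed_vector \<Rightarrow> real) \<Rightarrow> 'a \<Rightarrow> real" where
  "Mup lam g x = (SUP y. g y - lam * (norm (y - x))^2)"

definition MlowOn :: "'a set \<Rightarrow> real \<Rightarrow> ('a::real_normed_vector \<Rightarrow> real) \<Rightarrow> 'a \<Rightarrow> real" where
  "MlowOn S lam g x = (INF y\<in>S. g y + lam * (norm (y - x))^2)"

definition MupOn :: "'a set \<Rightarrow> real \<Rightarrow> ('a::real_normed_vector \<Rightarrow> real) \<Rightarrow> 'a \<Rightarrow> real" where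
  "MupOn S lam g x = (SUP y\<in>S. g y - lam * (norm (y - x))^2)"

definition convex_envelope :: "('a::real_vector \<Rightarrow> real) \<Rightarrow> 'a \<Rightarrow> real" where
  "convex_envelope h x = (SUP g\<in>{g. convex_on UNIV g \<and> (\<forall>y. g y \<le> h y)}. g x)"

definition Cl :: "real \<Rightarrow> ('a::real_normed_vector \<Rightarrow> real) \<Rightarrow> 'a \<Rightarrow> real" where
  "Cl lam g x = convex_envelope (\<lambda>y. g y + lam * (norm y)^2) x - lam * (norm x)^2"

definition Cu :: "real \<Rightarrow> ('a::real_normed_vector \<Rightarrow> real) \<Rightarrow> 'a \<Rightarrow> real" where
  "Cu lam g x = lam * (norm x)^2 - convex_envelope (\<lambda>y. lam * (norm y)^2 - g y) x"

definition ClOn :: "'a set \<Rightarrow> real \<Rightarrow> ('a::real_normed_vector \<Rightarrow> real) \<Rightarrow> 'a \<Rightarrow> real" where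
  "ClOn S lam g = MupOn S lam (MlowOn S lam g)"

definition CuOn :: "'a set \<Rightarrow> real \<Rightarrow> ('a::real_normed_vector \<Rightarrow> real) \<Rightarrow> 'a \<Rightarrow> real" where
  "CuOn S lam g = MlowOn S lam (MupOn S lam g)"

text \<open>Extensions of f from Omega: by inf (resp. sup) of f over Omega outside Omega.
  Restricted to the closure of Omega this is f^-_{closure}, on all of the space it is f^-_{R^n}.\<close>
definition ext_lower :: "'a set \<Rightarrow> ('a \<Rightarrow> real) \<Rightarrow> 'a \<Rightarrow> real" where
  "ext_lower \<Omega> f x = (if x \<in> \<Omega> then f x else Inf (f ` \<Omega>))"

definition ext_upper :: "'a set \<Rightarrow> ('a \<Rightarrow> real) \<Rightarrow> 'a \<Rightarrow> real" where
  "ext_upper \<Omega> f x = (if x \<in> \<Omega> then f x else Sup (f ` \<Omega>))"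

end

theory Submission
  imports Defs
begin

text \<open>Outside \<Omega> the extensions take the extreme value of f. So a competitor y outside the
  closure in a global envelope at x \<in> closure \<Omega> can be replaced by a frontier point on the
  segment from x to y: it carries the same value and is closer to x. Hence the local and global
  envelopes agree on the closure; the first envelope is again extremal outside \<Omega>, so the same
  applies to the second one. The compensated transform is Mup (Mlow g): x \<mapsto> Mup (Mlow g) x + lam |x|^2
  is a supremum of affine functions below g + lam |.|^2, and via a subgradient every convex
  minorant lies below it. Finally, an optimizer z for x obeys lam |z - x|^2 \<le> O_f, so it
  is closer to x than the frontier is.\<close>

lemma MlowOn_le:
  assumes "y \<in> S" "\<And>y. y \<in> S \<Longrightarrow> a \<le> g y" "lam \<ge> 0"
  shows "MlowOn S lam g x \<le> g y + lam * (norm (y - x))^2"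
  unfolding MlowOn_def
  by (rule cINF_lower[OF bdd_belowI2[where m=a]]) (use assms in \<open>auto intro: add_increasing2\<close>)

lemma MlowOn_le_self:
  assumes "x \<in> S" "\<And>y. y \<in> S \<Longrightarrow> a \<le> g y" "lam \<ge> 0"
  shows "MlowOn S lam g x \<le> g x"
  using MlowOn_le[of x S a g lam x] assms by simp

lemma MlowOn_ge:
  assumes "S \<noteq> {}" "\<And>y. y \<in> S \<Longrightarrow> a \<le> g y" "lam \<ge> 0"
  shows "a \<le> MlowOn S lam g x"
  unfolding MlowOn_def
  by (rule cINF_greatest) (use assms in \<open>auto intro: add_increasing2\<close>)

lemma MlowOn_eq_at_minimum:
  assumes "x \<in> S" "\<And>y. y \<in> S \<Longrightarrow> a \<le> g y" "g x = a" "lam \<ge> 0"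
  shows "MlowOn S lam g x = a"
proof -
  have "a \<le> MlowOn S lam g x" using MlowOn_ge[of S a g lam x] assms by blast
  then show ?thesis using MlowOn_le_self[of x S a g lam] assms by force
qed

lemma MupOn_uminus: "MupOn S lam (\<lambda>y. - g y) = (\<lambda>x. - MlowOn S lam g x)"
  unfolding MupOn_def MlowOn_def Inf_real_def by (simp add: image_image algebra_simps)

lemma MlowOn_uminus: "MlowOn S lam (\<lambda>y. - g y) = (\<lambda>x. - MupOn S lam g x)"
  unfolding MupOn_def MlowOn_def Inf_real_def by (simp add: image_image algebra_simps)

lemma MupOn_eq_uminus_MlowOn: "MupOn S lam g x = - MlowOn S lam (\<lambda>y. - g y) x"
  using MupOn_uminus[of S lam "\<lambda>y. - g y"] by simp

lemma MupOn_ge: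
  assumes "y \<in> S" "\<And>y. y \<in> S \<Longrightarrow> g y \<le> b" "lam \<ge> 0"
  shows "g y - lam * (norm (y - x))^2 \<le> MupOn S lam g x"
  using MlowOn_le[of y S "- b" "\<lambda>y. - g y" lam x] assms
  unfolding MupOn_eq_uminus_MlowOn by force

lemma MupOn_ge_self:
  assumes "x \<in> S" "\<And>y. y \<in> S \<Longrightarrow> g y \<le> b" "lam \<ge> 0"
  shows "g x \<le> MupOn S lam g x"
  using MupOn_ge[of x S g b lam x] assms by simp

lemma Mlow_eq_MlowOn_UNIV: "Mlow lam g = MlowOn UNIV lam g"
  unfolding Mlow_def MlowOn_def ..

lemma Mup_eq_MupOn_UNIV: "Mup lam g = MupOn UNIV lam g"
  unfolding Mup_def MupOn_def ..

lemma Mup_uminus: "Mup lam (\<lambda>y. - g y) = (\<lambda>x. - Mlow lam g x)"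
  unfolding Mup_eq_MupOn_UNIV Mlow_eq_MlowOn_UNIV by (rule MupOn_uminus)

lemma Mlow_uminus: "Mlow lam (\<lambda>y. - g y) = (\<lambda>x. - Mup lam g x)"
  unfolding Mup_eq_MupOn_UNIV Mlow_eq_MlowOn_UNIV by (rule MlowOn_uminus)

lemma CuOn_uminus: "CuOn S lam (\<lambda>y. - g y) = (\<lambda>x. - ClOn S lam g x)"
  unfolding CuOn_def ClOn_def MupOn_uminus MlowOn_uminus ..

lemma Cu_uminus: "Cu lam (\<lambda>y. - g y) = (\<lambda>x. - Cl lam g x)"
  unfolding Cu_def Cl_def by (simp add: add.commute)

section \<open>The lower compensated transform as a double envelope\<close>

lemma convex_on_UNIV_subgradient:
  fixes h :: "'a::euclidean_space \<Rightarrow> real"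
  assumes "convex_on UNIV h"
  obtains p where "\<And>y. h x + p \<bullet> (y - x) \<le> h y"
proof -
  let ?epi = "{(y, t). h y < t}"
  have "convex ?epi"
    unfolding convex_alt
  proof (clarsimp)
    fix y1 t1 y2 t2 and u :: real
    assume a: "h y1 < t1" "h y2 < t2" "0 \<le> u" "u \<le> 1"
    have "h ((1 - u) *\<^sub>R y1 + u *\<^sub>R y2) \<le> (1 - u) * h y1 + u * h y2"
      using convex_onD[OF assms] a by simp
    also have "\<dots> < (1 - u) * t1 + u * t2"
      using a by (cases "u = 0") (auto intro!: add_le_less_mono mult_left_mono mult_strict_left_mono)
    finally show "h ((1 - u) *\<^sub>R y1 + u *\<^sub>R y2) < (1 - u) * t1 + u * t2" .
  qed
  moreover have "(x, h x + 1) \<in> ?epi" "(x, h x) \<notin> ?epi" by auto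
  ultimately obtain q b where q: "q \<noteq> 0" "q \<bullet> (x, h x) \<le> b" "\<And>e. e \<in> ?epi \<Longrightarrow> b \<le> q \<bullet> e"
    using separating_hyperplane_sets[of "{(x, h x)}" ?epi] by blast
  obtain p s where qps: "q = (p, s)" by (cases q)
  have below: "p \<bullet> x + s * h x \<le> b" and above: "\<And>y t. h y < t \<Longrightarrow> b \<le> p \<bullet> y + s * t"
    using q(2,3) qps by auto
  \<comment> \<open>the separating hyperplane is not vertical, so it is the graph of an affine minorant\<close>
  have "s \<noteq> 0"
  proof
    assume "s = 0"
    then have "p \<noteq> 0" using q(1) qps by (auto simp: zero_prod_def)
    moreover have "b \<le> p \<bullet> (x - p)" using above[of "x - p" "h (x - p) + 1"] \<open>s = 0\<close> by simp
    ultimately have "p \<bullet> p \<le> 0" using below \<open>s = 0\<close> by (simp add: inner_diff_right)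
    then show False using \<open>p \<noteq> 0\<close> by (metis inner_gt_zero_iff not_le)
  qed
  moreover have "s \<ge> 0" using below above[of x "h x + 1"] by (simp add: algebra_simps)
  ultimately have "s > 0" by simp
  have "h x + (- (1 / s) *\<^sub>R p) \<bullet> (y - x) \<le> h y" for y
  proof -
    have "s * h x - p \<bullet> (y - x) \<le> s * h y"
    proof (rule field_le_epsilon)
      fix e :: real assume "0 < e"
      have "b \<le> p \<bullet> y + s * (h y + e / s)" using above[of y "h y + e / s"] \<open>0 < e\<close> \<open>s > 0\<close> by simp
      then show "s * h x - p \<bullet> (y - x) \<le> s * h y + e"
        using below \<open>s > 0\<close> by (simp add: inner_diff_right algebra_simps)
    qed
    then show ?thesis using \<open>s > 0\<close> by (simp add: field_simps)
  qed
  then show ?thesis using that by blast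
qed

lemma convex_on_cSUP:
  assumes "I \<noteq> {}" "\<And>i. i \<in> I \<Longrightarrow> convex_on S (f i)" "\<And>x. x \<in> S \<Longrightarrow> bdd_above ((\<lambda>i. f i x) ` I)"
    and "convex S"
  shows "convex_on S (\<lambda>x. SUP i\<in>I. f i x)"
proof (rule convex_onI[OF _ assms(4)])
  fix t :: real and x y assume t: "0 < t" "t < 1" and xy: "x \<in> S" "y \<in> S"
  show "(SUP i\<in>I. f i ((1 - t) *\<^sub>R x + t *\<^sub>R y)) \<le> (1 - t) * (SUP i\<in>I. f i x) + t * (SUP i\<in>I. f i y)"
  proof (rule cSUP_least[OF assms(1)])
    fix i assume "i \<in> I"
    have "f i ((1 - t) *\<^sub>R x + t *\<^sub>R y) \<le> (1 - t) * f i x + t * f i y"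
      using convex_onD[OF assms(2)[OF \<open>i \<in> I\<close>]] t xy by simp
    also have "\<dots> \<le> (1 - t) * (SUP i\<in>I. f i x) + t * (SUP i\<in>I. f i y)"
      using t \<open>i \<in> I\<close> assms(3) xy
      by (intro add_mono mult_left_mono cSUP_upper) auto
    finally show "f i ((1 - t) *\<^sub>R x + t *\<^sub>R y) \<le> \<dots>" .
  qed
qed

lemma convex_on_affine_inner:
  fixes z :: "'a::real_inner"
  shows "convex_on UNIV (\<lambda>x. c + d * (z \<bullet> x))"
  by (rule convex_onI) (simp_all add: inner_add_right algebra_simps)

lemma Mlow_le_self:
  assumes "\<And>y. a \<le> g y" "lam \<ge> 0"
  shows "Mlow lam g x \<le> g x"
  unfolding Mlow_eq_MlowOn_UNIV using MlowOn_le_self[of x UNIV a g] assms by simp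

lemma Mup_Mlow_le:
  assumes "\<And>y. a \<le> g y" "lam \<ge> 0"
  shows "Mup lam (Mlow lam g) x \<le> g x"
  unfolding Mup_def
proof (rule cSUP_least)
  fix z
  have "Mlow lam g z \<le> g x + lam * (norm (x - z))^2"
    unfolding Mlow_eq_MlowOn_UNIV using MlowOn_le assms by blast
  then show "Mlow lam g z - lam * (norm (z - x))^2 \<le> g x" by (simp add: norm_minus_commute)
qed simp

lemma norm_diff_square:
  fixes x z :: "'a::real_inner"
  shows "(norm (z - x))^2 = (norm z)^2 - 2 * (z \<bullet> x) + (norm x)^2"
  by (simp add: power2_norm_eq_inner inner_diff_left inner_diff_right inner_commute)

lemma Mup_plus_square_eq_SUP_affine:
  fixes G :: "'a::real_inner \<Rightarrow> real"
  assumes "\<And>z. G z \<le> b" "lam \<ge> 0"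
  shows "Mup lam G x + lam * (norm x)^2 = (SUP z. G z - lam * (norm z)^2 + 2 * lam * (z \<bullet> x))"
proof -
  have "bdd_above (range (\<lambda>z. G z - lam * (norm (z - x))^2))"
    using assms by (intro bdd_aboveI2[where M=b]) (smt (verit) zero_le_power2 mult_nonneg_nonneg)
  then have "Mup lam G x + lam * (norm x)^2 = (SUP z. lam * (norm x)^2 + (G z - lam * (norm (z - x))^2))"
    unfolding Mup_def by (simp add: Sup_add_eq add.commute)
  also have "\<dots> = (SUP z. G z - lam * (norm z)^2 + 2 * lam * (z \<bullet> x))"
    by (simp add: norm_diff_square algebra_simps)
  finally show ?thesis .
qed

lemma convex_minorant_le_Mup_Mlow:
  fixes g :: "'a::euclidean_space \<Rightarrow> real"
  assumes h: "convex_on UNIV h" "\<And>y. h y \<le> g y + lam * (norm y)^2"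
    and g: "\<And>y. a \<le> g y" "\<And>y. g y \<le> b" and "lam > 0"
  shows "h x \<le> Mup lam (Mlow lam g) x + lam * (norm x)^2"
proof -
  obtain p where p: "\<And>y. h x + p \<bullet> (y - x) \<le> h y"
    using convex_on_UNIV_subgradient[OF h(1)] by blast
  \<comment> \<open>completing the square: with p = 2 lam z the affine minorant of g + lam |.|^2 at x
      becomes a lower bound for g + lam |. - z|^2\<close>
  define z where "z = (1 / (2 * lam)) *\<^sub>R p"
  have pz: "p = (2 * lam) *\<^sub>R z" unfolding z_def using \<open>lam > 0\<close> by simp
  have "h x - lam * (norm x)^2 + lam * (norm (z - x))^2 \<le> Mlow lam g z"
    unfolding Mlow_def
  proof (rule cINF_greatest)
    fix y
    have "h x + p \<bullet> (y - x) \<le> g y + lam * (norm y)^2" using p[of y] h(2)[of y] by linarith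
    then show "h x - lam * (norm x)^2 + lam * (norm (z - x))^2 \<le> g y + lam * (norm (y - z))^2"
      unfolding pz norm_diff_square[of z x] norm_diff_square[of y z]
      by (simp add: inner_diff_right inner_commute[of y z] algebra_simps)
  qed simp
  moreover have "Mlow lam g z - lam * (norm (z - x))^2 \<le> Mup lam (Mlow lam g) x"
  proof -
    have "Mlow lam g y \<le> b" for y
      using Mlow_le_self[of a g lam y] g \<open>lam > 0\<close> by (meson less_imp_le order_trans)
    then show ?thesis
      unfolding Mup_eq_MupOn_UNIV using MupOn_ge[of z UNIV "Mlow lam g" b lam x] \<open>lam > 0\<close> by simp
  qed
  ultimately show ?thesis by simp
qed

lemma Cl_eq_Mup_Mlow:
  fixes g :: "'a::euclidean_space \<Rightarrow> real"
  assumes g: "\<And>y. a \<le> g y" "\<And>y. g y \<le> b" and "lam > 0"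
  shows "Cl lam g x = Mup lam (Mlow lam g) x"
proof -
  define A where "A y = Mup lam (Mlow lam g) y + lam * (norm y)^2" for y
  let ?minorants = "{h. convex_on UNIV h \<and> (\<forall>y. h y \<le> g y + lam * (norm y)^2)}"
  have Mlow_le: "Mlow lam g z \<le> b" for z
    using Mlow_le_self[of a g lam z] g \<open>lam > 0\<close> by (meson less_imp_le order_trans)
  have A_eq: "A = (\<lambda>y. SUP z. Mlow lam g z - lam * (norm z)^2 + 2 * lam * (z \<bullet> y))"
    unfolding A_def using Mup_plus_square_eq_SUP_affine[of "Mlow lam g" b lam] Mlow_le \<open>lam > 0\<close>
    by auto
  have bdd: "bdd_above (range (\<lambda>z. Mlow lam g z - lam * (norm z)^2 + 2 * lam * (z \<bullet> x)))" for x
  proof (rule bdd_aboveI2)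
    fix z
    have "Mlow lam g z - lam * (norm z)^2 + 2 * lam * (z \<bullet> x)
        = Mlow lam g z - lam * (norm (z - x))^2 + lam * (norm x)^2"
      by (simp add: norm_diff_square algebra_simps)
    also have "\<dots> \<le> b + lam * (norm x)^2"
      using Mlow_le[of z] \<open>lam > 0\<close> by (smt (verit) mult_nonneg_nonneg zero_le_power2)
    finally show "Mlow lam g z - lam * (norm z)^2 + 2 * lam * (z \<bullet> x) \<le> b + lam * (norm x)^2" .
  qed
  have "convex_on UNIV A"
    unfolding A_eq using bdd by (intro convex_on_cSUP convex_on_affine_inner) auto
  moreover have "A y \<le> g y + lam * (norm y)^2" for y
    unfolding A_def using Mup_Mlow_le[of a g lam y] g \<open>lam > 0\<close> by simp
  ultimately have A_minorant: "A \<in> ?minorants" by blast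
  have "A x \<le> convex_envelope (\<lambda>y. g y + lam * (norm y)^2) x"
    unfolding convex_envelope_def
    by (rule cSUP_upper[OF A_minorant bdd_aboveI2[where M="g x + lam * (norm x)^2"]]) auto
  moreover have "convex_envelope (\<lambda>y. g y + lam * (norm y)^2) x \<le> A x"
    unfolding convex_envelope_def A_def
    using convex_minorant_le_Mup_Mlow[of _ g lam a b x] g \<open>lam > 0\<close> A_minorant
    by (intro cSUP_least) auto
  ultimately show ?thesis unfolding Cl_def A_def by simp
qed

section \<open>Localization to the closure\<close>

lemma frontier_point_closer:
  fixes \<Omega> :: "'a::real_normed_vector set"
  assumes "open \<Omega>" "x \<in> closure \<Omega>" "y \<notin> \<Omega>"
  obtains w where "w \<in> frontier \<Omega>" "norm (w - x) \<le> norm (y - x)"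
proof (cases "x \<in> \<Omega>")
  case False
  then have "x \<in> frontier \<Omega>" using assms by (simp add: frontier_def interior_open)
  then show ?thesis using that by auto
next
  case True
  have "closed_segment x y \<inter> frontier \<Omega> \<noteq> {}"
    by (rule connected_Int_frontier) (use True assms in auto)
  then obtain w where "w \<in> closed_segment x y" "w \<in> frontier \<Omega>" by blast
  then show ?thesis using that segment_bound1 by blast
qed

lemma infdist_frontier_le:
  fixes \<Omega> :: "'a::real_normed_vector set"
  assumes "open \<Omega>" "x \<in> closure \<Omega>" "y \<notin> \<Omega>"
  shows "infdist x (frontier \<Omega>) \<le> norm (y - x)"
proof -
  obtain w where "w \<in> frontier \<Omega>" "norm (w - x) \<le> norm (y - x)"
    using frontier_point_closer[OF assms] .
  then show ?thesis using infdist_le[of w "frontier \<Omega>" x] by (simp add: dist_norm norm_minus_commute)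
qed

lemma MlowOn_closure_eq_Mlow:
  fixes \<Omega> :: "'a::real_normed_vector set"
  assumes "open \<Omega>" "x \<in> closure \<Omega>" "\<And>y. y \<notin> \<Omega> \<Longrightarrow> k y = c" "\<And>y. a \<le> k y" "lam \<ge> 0"
  shows "MlowOn (closure \<Omega>) lam k x = Mlow lam k x"
proof (rule antisym)
  show "MlowOn (closure \<Omega>) lam k x \<le> Mlow lam k x"
    unfolding Mlow_def
  proof (rule cINF_greatest)
    fix y
    show "MlowOn (closure \<Omega>) lam k x \<le> k y + lam * (norm (y - x))^2"
    proof (cases "y \<in> closure \<Omega>")
      case True
      then show ?thesis using MlowOn_le assms(4,5) by blast
    next
      case False
      then have "y \<notin> \<Omega>" using closure_subset by blast
      then obtain w where w: "w \<in> frontier \<Omega>" "norm (w - x) \<le> norm (y - x)"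
        using frontier_point_closer[OF assms(1,2)] by blast
      have "w \<in> closure \<Omega>" "w \<notin> \<Omega>"
        using w(1) assms(1) by (auto simp: frontier_def interior_open)
      then have "MlowOn (closure \<Omega>) lam k x \<le> k w + lam * (norm (w - x))^2"
        using MlowOn_le assms(4,5) by blast
      also have "\<dots> \<le> k y + lam * (norm (y - x))^2"
        using w(2) assms(3,5) \<open>w \<notin> \<Omega>\<close> \<open>y \<notin> \<Omega>\<close> by (simp add: mult_left_mono power_mono)
      finally show ?thesis .
    qed
  qed simp
  show "Mlow lam k x \<le> MlowOn (closure \<Omega>) lam k x"
    unfolding Mlow_eq_MlowOn_UNIV MlowOn_def using assms(2)
    by (intro cINF_superset_mono bdd_belowI2[where m=a]) (use assms(4,5) in \<open>auto intro: add_increasing2\<close>)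
qed

lemma MupOn_closure_eq_Mup:
  fixes \<Omega> :: "'a::real_normed_vector set"
  assumes "open \<Omega>" "x \<in> closure \<Omega>" "\<And>y. y \<notin> \<Omega> \<Longrightarrow> k y = c" "\<And>y. k y \<le> b" "lam \<ge> 0"
  shows "MupOn (closure \<Omega>) lam k x = Mup lam k x"
  using MlowOn_closure_eq_Mlow[OF assms(1,2), of "\<lambda>y. - k y" "- c" "- b" lam] assms(3-5)
  unfolding MupOn_eq_uminus_MlowOn Mup_eq_MupOn_UNIV Mlow_eq_MlowOn_UNIV by simp

lemma MupOn_MlowOn_closure_eq:
  fixes \<Omega> :: "'a::real_normed_vector set"
  assumes "open \<Omega>" "x \<in> closure \<Omega>" "\<And>y. y \<notin> \<Omega> \<Longrightarrow> k y = c" "\<And>y. c \<le> k y" "\<And>y. k y \<le> b"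
    and "lam \<ge> 0"
  shows "MupOn (closure \<Omega>) lam (MlowOn (closure \<Omega>) lam k) x = Mup lam (Mlow lam k) x"
proof -
  have "MupOn (closure \<Omega>) lam (MlowOn (closure \<Omega>) lam k) x = MupOn (closure \<Omega>) lam (Mlow lam k) x"
    unfolding MupOn_def using MlowOn_closure_eq_Mlow[OF assms(1) _ assms(3,4,6)] by simp
  also have "\<dots> = Mup lam (Mlow lam k) x"
  proof (rule MupOn_closure_eq_Mup[OF assms(1,2), where c=c and b=b])
    show "Mlow lam k y = c" if "y \<notin> \<Omega>" for y
      unfolding Mlow_eq_MlowOn_UNIV using MlowOn_eq_at_minimum[of y UNIV c k lam] assms(3,4,6) that by simp
    show "Mlow lam k y \<le> b" for y
      using Mlow_le_self[of c k lam y] assms(4-6) by (meson order_trans)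
  qed (rule assms(6))
  finally show ?thesis .
qed

lemma ClOn_closure_eq_Cl:
  fixes \<Omega> :: "'a::euclidean_space set"
  assumes "open \<Omega>" "x \<in> closure \<Omega>" "\<And>y. y \<notin> \<Omega> \<Longrightarrow> k y = c" "\<And>y. c \<le> k y" "\<And>y. k y \<le> b"
    and "lam > 0"
  shows "ClOn (closure \<Omega>) lam k x = Cl lam k x"
  unfolding ClOn_def using MupOn_MlowOn_closure_eq[OF assms(1-5)] Cl_eq_Mup_Mlow[of c k b lam x] assms(4-6)
  by simp

lemma MlowOn_MupOn_closure_eq:
  fixes \<Omega> :: "'a::real_normed_vector set"
  assumes "open \<Omega>" "x \<in> closure \<Omega>" "\<And>y. y \<notin> \<Omega> \<Longrightarrow> k y = c" "\<And>y. a \<le> k y" "\<And>y. k y \<le> c"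
    and "lam \<ge> 0"
  shows "MlowOn (closure \<Omega>) lam (MupOn (closure \<Omega>) lam k) x = Mlow lam (Mup lam k) x"
  using MupOn_MlowOn_closure_eq[OF assms(1,2), of "\<lambda>y. - k y" "- c" "- a" lam] assms(3-6)
  unfolding MlowOn_uminus MupOn_uminus Mlow_uminus Mup_uminus by simp

lemma CuOn_closure_eq_Cu:
  fixes \<Omega> :: "'a::euclidean_space set"
  assumes "open \<Omega>" "x \<in> closure \<Omega>" "\<And>y. y \<notin> \<Omega> \<Longrightarrow> k y = c" "\<And>y. a \<le> k y" "\<And>y. k y \<le> c"
    and "lam > 0"
  shows "CuOn (closure \<Omega>) lam k x = Cu lam k x"
  using ClOn_closure_eq_Cl[OF assms(1,2), of "\<lambda>y. - k y" "- c" "- a" lam] assms(3-6)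
  using CuOn_uminus[of "closure \<Omega>" lam "\<lambda>y. - k y"] Cu_uminus[of lam "\<lambda>y. - k y"]
  by (simp add: fun_eq_iff)

section \<open>Optimizers stay away from the frontier\<close>

lemma MlowOn_minimizer_dist_le:
  assumes "x \<in> S" "z \<in> S" "\<And>y. y \<in> S \<Longrightarrow> a \<le> k y" "\<And>y. y \<in> S \<Longrightarrow> k y \<le> b" "lam \<ge> 0"
    and "MlowOn S lam k x = k z + lam * (norm (z - x))^2"
  shows "lam * (norm (z - x))^2 \<le> b - a"
proof -
  have "MlowOn S lam k x \<le> k x"
    using MlowOn_le_self[of x S a k lam] assms(1,3,5) by blast
  then show ?thesis using assms(3)[of z] assms(4)[of x] assms(1,2,6) by linarith
qed

lemma MupOn_maximizer_dist_le:
  assumes "x \<in> S" "z \<in> S" "\<And>y. y \<in> S \<Longrightarrow> a \<le> k y" "\<And>y. y \<in> S \<Longrightarrow> k y \<le> b" "lam \<ge> 0"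
    and "MupOn S lam k x = k z - lam * (norm (z - x))^2"
  shows "lam * (norm (z - x))^2 \<le> b - a"
proof -
  have "k x \<le> MupOn S lam k x"
    using MupOn_ge_self[of x S k b lam] assms(1,4,5) by blast
  then show ?thesis using assms(3)[of x] assms(4)[of z] assms(1,2,6) by linarith
qed

lemma square_bound_imp_less:
  fixes r d :: real
  assumes "lam > 0" "d \<ge> 0" "lam * r^2 \<le> c" "c / lam < d^2"
  shows "r < d"
proof (rule power2_less_imp_less[OF _ assms(2)])
  have "c < lam * d^2" using assms(1,4) by (simp add: pos_divide_less_eq mult.commute)
  then have "lam * r^2 < lam * d^2" using assms(3) by linarith
  then show "r^2 < d^2" using assms(1) by simp
qed

lemma norm_less_infdist_frontier_imp_mem:
  fixes \<Omega> :: "'a::real_normed_vector set"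
  assumes "open \<Omega>" "x \<in> closure \<Omega>" "norm (z - x) < infdist x (frontier \<Omega>)"
  shows "z \<in> \<Omega>"
  using infdist_frontier_le[OF assms(1,2), of z] assms(3) by linarith

lemma MlowOn_closure_minimizer_mem:
  fixes \<Omega> :: "'a::real_normed_vector set"
  assumes "open \<Omega>" "x \<in> \<Omega>" "z \<in> closure \<Omega>" "\<And>y. y \<in> closure \<Omega> \<Longrightarrow> a \<le> k y"
    and "\<And>y. y \<in> closure \<Omega> \<Longrightarrow> k y \<le> b"
    and "lam > 0" "(b - a) / lam < (infdist x (frontier \<Omega>))^2"
    and "MlowOn (closure \<Omega>) lam k x = k z + lam * (norm (z - x))^2"
  shows "z \<in> \<Omega>"
proof -
  have "x \<in> closure \<Omega>" using assms(2) closure_subset by blast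
  then have "lam * (norm (z - x))^2 \<le> b - a"
    using MlowOn_minimizer_dist_le assms(3-6,8) by (metis less_imp_le)
  then have "norm (z - x) < infdist x (frontier \<Omega>)"
    using square_bound_imp_less infdist_nonneg assms(6,7) by blast
  then show ?thesis using norm_less_infdist_frontier_imp_mem assms(1) \<open>x \<in> closure \<Omega>\<close> by blast
qed

lemma MupOn_MlowOn_closure_optimizers_mem:
  fixes \<Omega> :: "'a::real_normed_vector set"
  assumes "open \<Omega>" "x \<in> \<Omega>" "z \<in> closure \<Omega>" "\<And>y. y \<in> closure \<Omega> \<Longrightarrow> a \<le> k y"
    and "\<And>y. y \<in> closure \<Omega> \<Longrightarrow> k y \<le> b"
    and "lam > 0" "4 * (b - a) / lam < (infdist x (frontier \<Omega>))^2"
    and "MupOn (closure \<Omega>) lam (MlowOn (closure \<Omega>) lam k) x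
      = MlowOn (closure \<Omega>) lam k z - lam * (norm (z - x))^2"
  shows "z \<in> \<Omega>"
    and "\<And>y. y \<in> closure \<Omega> \<Longrightarrow> MlowOn (closure \<Omega>) lam k z = k y + lam * (norm (y - z))^2 \<Longrightarrow> y \<in> \<Omega>"
proof -
  define d where "d = infdist x (frontier \<Omega>)"
  have "d \<ge> 0" unfolding d_def by (rule infdist_nonneg)
  have "x \<in> closure \<Omega>" using assms(2) closure_subset by blast
  have H_lower: "a \<le> MlowOn (closure \<Omega>) lam k y" if "y \<in> closure \<Omega>" for y
    using MlowOn_ge[of "closure \<Omega>" a k lam y] assms(4,6) that by fastforce
  have H_upper: "MlowOn (closure \<Omega>) lam k y \<le> b" if "y \<in> closure \<Omega>" for y
    using MlowOn_le_self[of y "closure \<Omega>" a k lam] assms(4-6) that by fastforce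
  have "(d / 2)^2 = d^2 / 4" by (simp add: power_divide)
  then have quarter: "(b - a) / lam < (d / 2)^2"
    using assms(7) unfolding d_def by (simp add: field_split_simps)
  have "lam * (norm (z - x))^2 \<le> b - a"
    using MupOn_maximizer_dist_le[OF \<open>x \<in> closure \<Omega>\<close> assms(3) H_lower H_upper] assms(6,8) by simp
  then have near: "norm (z - x) < d / 2"
    using square_bound_imp_less[OF assms(6) _ _ quarter] \<open>d \<ge> 0\<close> by simp
  then show "z \<in> \<Omega>"
    using norm_less_infdist_frontier_imp_mem[OF assms(1) \<open>x \<in> closure \<Omega>\<close>, of z] \<open>d \<ge> 0\<close>
    unfolding d_def by linarith
  have "d / 2 < infdist z (frontier \<Omega>)"
    using infdist_triangle[of x "frontier \<Omega>" z] near
    unfolding d_def by (simp add: dist_norm norm_minus_commute)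
  then have "(d / 2)^2 < (infdist z (frontier \<Omega>))^2"
    using \<open>d \<ge> 0\<close> by (intro power_strict_mono) auto
  then have "(b - a) / lam < (infdist z (frontier \<Omega>))^2" using quarter by linarith
  then show "y \<in> \<Omega>" if "y \<in> closure \<Omega>" "MlowOn (closure \<Omega>) lam k z = k y + lam * (norm (y - z))^2" for y
    using MlowOn_closure_minimizer_mem[where x=z and z=y and a=a and b=b and k=k and lam=lam]
      assms(1,4-6) \<open>z \<in> \<Omega>\<close> that by blast
qed

lemma MupOn_closure_maximizer_mem:
  fixes \<Omega> :: "'a::real_normed_vector set"
  assumes "open \<Omega>" "x \<in> \<Omega>" "z \<in> closure \<Omega>" "\<And>y. y \<in> closure \<Omega> \<Longrightarrow> a \<le> k y"
    and "\<And>y. y \<in> closure \<Omega> \<Longrightarrow> k y \<le> b"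
    and "lam > 0" "(b - a) / lam < (infdist x (frontier \<Omega>))^2"
    and "MupOn (closure \<Omega>) lam k x = k z - lam * (norm (z - x))^2"
  shows "z \<in> \<Omega>"
  using MlowOn_closure_minimizer_mem[OF assms(1-3), of "- b" "\<lambda>y. - k y" "- a" lam] assms(4-8)
  unfolding MupOn_eq_uminus_MlowOn by fastforce

lemma MlowOn_MupOn_closure_optimizers_mem:
  fixes \<Omega> :: "'a::real_normed_vector set"
  assumes "open \<Omega>" "x \<in> \<Omega>" "z \<in> closure \<Omega>" "\<And>y. y \<in> closure \<Omega> \<Longrightarrow> a \<le> k y"
    and "\<And>y. y \<in> closure \<Omega> \<Longrightarrow> k y \<le> b"
    and "lam > 0" "4 * (b - a) / lam < (infdist x (frontier \<Omega>))^2"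
    and "MlowOn (closure \<Omega>) lam (MupOn (closure \<Omega>) lam k) x
      = MupOn (closure \<Omega>) lam k z + lam * (norm (z - x))^2"
  shows "z \<in> \<Omega>"
    and "\<And>y. y \<in> closure \<Omega> \<Longrightarrow> MupOn (closure \<Omega>) lam k z = k y - lam * (norm (y - z))^2 \<Longrightarrow> y \<in> \<Omega>"
proof -
  have lower: "- b \<le> - k y" and upper: "- k y \<le> - a" if "y \<in> closure \<Omega>" for y
    using assms(4,5)[OF that] by simp_all
  have eq: "MupOn (closure \<Omega>) lam (MlowOn (closure \<Omega>) lam (\<lambda>y. - k y)) x
      = MlowOn (closure \<Omega>) lam (\<lambda>y. - k y) z - lam * (norm (z - x))^2"
    using assms(8) unfolding MlowOn_uminus MupOn_uminus by simp
  have osc: "4 * (- a - - b) / lam < (infdist x (frontier \<Omega>))^2" using assms(7) by simp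
  note neg = MupOn_MlowOn_closure_optimizers_mem[where a="- b" and b="- a" and k="\<lambda>y. - k y",
      OF assms(1-3) lower upper assms(6) osc eq]
  show "z \<in> \<Omega>" by (rule neg(1))
  show "y \<in> \<Omega>" if "y \<in> closure \<Omega>" "MupOn (closure \<Omega>) lam k z = k y - lam * (norm (y - z))^2" for y
    by (rule neg(2)) (use that in \<open>simp_all add: MlowOn_uminus\<close>)
qed

lemma Inf_le_image_le_Sup:
  fixes f :: "'a \<Rightarrow> real"
  assumes "bounded (f ` \<Omega>)" "x \<in> \<Omega>"
  shows "Inf (f ` \<Omega>) \<le> f x" "f x \<le> Sup (f ` \<Omega>)"
  using assms by (auto intro: cInf_lower cSup_upper bounded_imp_bdd_below bounded_imp_bdd_above)

lemma ext_lower_bounds: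
  assumes "\<Omega> \<noteq> {}" "bounded (f ` \<Omega>)"
  shows "Inf (f ` \<Omega>) \<le> ext_lower \<Omega> f x" "ext_lower \<Omega> f x \<le> Sup (f ` \<Omega>)"
  using Inf_le_image_le_Sup[OF assms(2)] assms(1) unfolding ext_lower_def by (auto intro: order_trans)

lemma ext_upper_bounds:
  assumes "\<Omega> \<noteq> {}" "bounded (f ` \<Omega>)"
  shows "Inf (f ` \<Omega>) \<le> ext_upper \<Omega> f x" "ext_upper \<Omega> f x \<le> Sup (f ` \<Omega>)"
  using Inf_le_image_le_Sup[OF assms(2)] assms(1) unfolding ext_upper_def by (auto intro: order_trans)

theorem theorem3p1:
  fixes \<Omega> :: "'a::euclidean_space set" and f :: "'a \<Rightarrow> real" and lam :: real
  assumes "open \<Omega>" and "bounded \<Omega>" and "bounded (f ` \<Omega>)" and "lam > 0"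
  shows "(\<forall>x\<in>closure \<Omega>.
            MlowOn (closure \<Omega>) lam (ext_lower \<Omega> f) x = Mlow lam (ext_lower \<Omega> f) x
          \<and> MupOn (closure \<Omega>) lam (ext_upper \<Omega> f) x = Mup lam (ext_upper \<Omega> f) x
          \<and> MupOn (closure \<Omega>) lam (MlowOn (closure \<Omega>) lam (ext_lower \<Omega> f)) x
              = Mup lam (Mlow lam (ext_lower \<Omega> f)) x
          \<and> MlowOn (closure \<Omega>) lam (MupOn (closure \<Omega>) lam (ext_upper \<Omega> f)) x
              = Mlow lam (Mup lam (ext_upper \<Omega> f)) x
          \<and> ClOn (closure \<Omega>) lam (ext_lower \<Omega> f) x = Cl lam (ext_lower \<Omega> f) x
          \<and> CuOn (closure \<Omega>) lam (ext_upper \<Omega> f) x = Cu lam (ext_upper \<Omega> f) x)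
    \<and> (\<forall>x\<in>\<Omega>. \<forall>z\<in>closure \<Omega>.
          (infdist x (frontier \<Omega>))^2 > (Sup (f ` \<Omega>) - Inf (f ` \<Omega>)) / lam \<longrightarrow>
          ((MlowOn (closure \<Omega>) lam (ext_lower \<Omega> f) x
              = ext_lower \<Omega> f z + lam * (norm (z - x))^2 \<longrightarrow> z \<in> \<Omega>)
         \<and> (MupOn (closure \<Omega>) lam (ext_upper \<Omega> f) x
              = ext_upper \<Omega> f z - lam * (norm (z - x))^2 \<longrightarrow> z \<in> \<Omega>)))
    \<and> (\<forall>x\<in>\<Omega>. \<forall>z\<in>closure \<Omega>.
          (infdist x (frontier \<Omega>))^2 > 4 * (Sup (f ` \<Omega>) - Inf (f ` \<Omega>)) / lam \<longrightarrow>
          ((MupOn (closure \<Omega>) lam (MlowOn (closure \<Omega>) lam (ext_lower \<Omega> f)) x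
              = MlowOn (closure \<Omega>) lam (ext_lower \<Omega> f) z - lam * (norm (z - x))^2 \<longrightarrow>
              z \<in> \<Omega> \<and>
              (\<forall>y\<in>closure \<Omega>. MlowOn (closure \<Omega>) lam (ext_lower \<Omega> f) z
                  = ext_lower \<Omega> f y + lam * (norm (y - z))^2 \<longrightarrow> y \<in> \<Omega>))
         \<and> (MlowOn (closure \<Omega>) lam (MupOn (closure \<Omega>) lam (ext_upper \<Omega> f)) x
              = MupOn (closure \<Omega>) lam (ext_upper \<Omega> f) z + lam * (norm (z - x))^2 \<longrightarrow>
              z \<in> \<Omega> \<and>
              (\<forall>y\<in>closure \<Omega>. MupOn (closure \<Omega>) lam (ext_upper \<Omega> f) z
                  = ext_upper \<Omega> f y - lam * (norm (y - z))^2 \<longrightarrow> y \<in> \<Omega>))))"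
proof (cases "\<Omega> = {}")
  case True
  then show ?thesis by simp
next
  case False
  let ?lo = "ext_lower \<Omega> f" and ?up = "ext_upper \<Omega> f"
  note lo = ext_lower_bounds[OF False assms(3)] and up = ext_upper_bounds[OF False assms(3)]
  have lo_out: "?lo y = Inf (f ` \<Omega>)" and up_out: "?up y = Sup (f ` \<Omega>)" if "y \<notin> \<Omega>" for y
    using that unfolding ext_lower_def ext_upper_def by simp_all
  have "lam \<ge> 0" using assms(4) by simp
  show ?thesis
  proof (intro conjI ballI impI, goal_cases)
    case 1 show ?case using assms(1) 1 lo_out lo(1) \<open>lam \<ge> 0\<close> by (rule MlowOn_closure_eq_Mlow)
  next
    case 2 show ?case using assms(1) 2 up_out up(2) \<open>lam \<ge> 0\<close> by (rule MupOn_closure_eq_Mup)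
  next
    case 3 show ?case using assms(1) 3 lo_out lo \<open>lam \<ge> 0\<close> by (rule MupOn_MlowOn_closure_eq)
  next
    case 4 show ?case using assms(1) 4 up_out up \<open>lam \<ge> 0\<close> by (rule MlowOn_MupOn_closure_eq)
  next
    case 5 show ?case using assms(1) 5 lo_out lo assms(4) by (rule ClOn_closure_eq_Cl)
  next
    case 6 show ?case using assms(1) 6 up_out up assms(4) by (rule CuOn_closure_eq_Cu)
  next
    case 7 show ?case
      using assms(1) 7(1,2) lo assms(4) 7(3,4) by (rule MlowOn_closure_minimizer_mem)
  next
    case 8 show ?case
      using assms(1) 8(1,2) up assms(4) 8(3,4) by (rule MupOn_closure_maximizer_mem)
  next
    case 9 show ?case
      using assms(1) 9(1,2) lo assms(4) 9(3,4) by (rule MupOn_MlowOn_closure_optimizers_mem(1))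
  next
    case 10 show ?case
      using assms(1) 10(1,2) lo assms(4) 10(3-6) by (rule MupOn_MlowOn_closure_optimizers_mem(2))
  next
    case 11 show ?case
      using assms(1) 11(1,2) up assms(4) 11(3,4) by (rule MlowOn_MupOn_closure_optimizers_mem(1))
  next
    case 12 show ?case
      using assms(1) 12(1,2) up assms(4) 12(3-6) by (rule MlowOn_MupOn_closure_optimizers_mem(2))
  qed
qed

end
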